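(* Let $G$ be a compact group and $\alpha$ an automorphism of $G$ such that $(G,\alpha)$ is topologically transitive and has finite depth. Then the homoclinic group $\mathrm{con}(\alpha)\cap\mathrm{con}(\alpha^{-1})$ is dense in $G$.
   Context: $\mathrm{con}(\beta)=\{x\in G:\beta^n(x)\to1 \text{ as } n\to\infty\}$. $(G,\alpha)$ is topologically transitive if some orbit $\{\alpha^n(x):n\in\mathbb{Z}\}$ is dense in $G$; it has finite depth if there is an open subgroup $V\le G$ with $\bigcap_{k\in\mathbb{Z}}\alpha^k(V)=\{1\}$. *)

theory Defs
  imports "HOL-Analysis.Analysis"
begin

text \<open>Groups are written additively (class group_add, not necessarily commutative);
  the identity 1 of the paper is 0 here.\<close>

definition topological_group :: "('a::{topological_space, group_add}) itself \<Rightarrow> bool" where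
  "topological_group _ \<longleftrightarrow>
     continuous_on UNIV (\<lambda>p::'a \<times> 'a. fst p + snd p) \<and>
     continuous_on UNIV (\<lambda>x::'a. - x)"

definition top_group_automorphism :: "('a::{topological_space, group_add} \<Rightarrow> 'a) \<Rightarrow> bool" where
  "top_group_automorphism \<alpha> \<longleftrightarrow>
     bij \<alpha> \<and> (\<forall>x y. \<alpha> (x + y) = \<alpha> x + \<alpha> y) \<and>
     continuous_on UNIV \<alpha> \<and> continuous_on UNIV (inv \<alpha>)"

definition zpow :: "('a \<Rightarrow> 'a) \<Rightarrow> int \<Rightarrow> 'a \<Rightarrow> 'a" where
  "zpow \<alpha> k = (if 0 \<le> k then \<alpha> ^^ nat k else (inv \<alpha>) ^^ nat (- k))"

definition con :: "('a::{topological_space, group_add} \<Rightarrow> 'a) \<Rightarrow> 'a set" where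
  "con \<beta> = {x. ((\<lambda>n. (\<beta> ^^ n) x) \<longlongrightarrow> 0) sequentially}"

definition is_subgroup :: "('a::group_add) set \<Rightarrow> bool" where
  "is_subgroup V \<longleftrightarrow> 0 \<in> V \<and> (\<forall>x\<in>V. \<forall>y\<in>V. x + y \<in> V) \<and> (\<forall>x\<in>V. - x \<in> V)"

definition topologically_transitive :: "('a::topological_space \<Rightarrow> 'a) \<Rightarrow> bool" where
  "topologically_transitive \<alpha> \<longleftrightarrow> (\<exists>x. closure (range (\<lambda>k. zpow \<alpha> k x)) = UNIV)"

definition finite_depth :: "('a::{topological_space, group_add} \<Rightarrow> 'a) \<Rightarrow> bool" where
  "finite_depth \<alpha> \<longleftrightarrow>
     (\<exists>V. open V \<and> is_subgroup V \<and> (\<Inter>k. zpow \<alpha> k ` V) = {0})"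

end

theory Submission
  imports Defs
begin

text \<open>Fix an open subgroup V whose translates under all powers of \<alpha> meet in 0. By compactness,
  the points x with \<alpha>^j x \<in> V for |j| \<le> m form a neighbourhood basis of 0, so an orbit that
  eventually stays in V converges to 0. Compactness also yields a local product structure: a point
  whose orbit lies in V during a window of a fixed length M splits as s + r, where the orbit of s
  lies in V from the start of the window on and that of r up to its end. In a non-discrete G,
  transitivity provides, near any given point, a point y whose orbit lies in V during one such
  window far in the future and another far in the past; splitting y at both windows cuts off both
  tails of its orbit and leaves a homoclinic point close to y.\<close>

lemma compact_UNIV_imp_nest:
  fixes C :: "nat \<Rightarrow> 'a::topological_space set"
  assumes "compact (UNIV :: 'a set)" and "\<And>n. closed (C n)" and "\<And>n. C n \<noteq> {}"
    and "\<And>m n. m \<le> n \<Longrightarrow> C n \<subseteq> C m"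
  shows "(\<Inter>n. C n) \<noteq> {}"
  using compact_space_imp_nest[of euclidean C] assms by (simp add: compact_space_def decseq_def)

lemma zpow_0 [simp]: "zpow f 0 = id"
  by (simp add: zpow_def fun_eq_iff)

lemma zpow_of_nat: "zpow f (int n) = f ^^ n"
  by (simp add: zpow_def)

lemma zpow_minus_of_nat: "zpow f (- int n) = inv f ^^ n"
  by (cases "n = 0") (simp_all add: zpow_def)

lemma zpow_plus_1:
  assumes "bij f" shows "zpow f (k + 1) y = f (zpow f k y)"
proof (cases "0 \<le> k")
  case True
  then have "nat (k + 1) = Suc (nat k)" by simp
  with True show ?thesis by (simp add: zpow_def)
next
  case False
  then have "nat (- k) = Suc (nat (- (k + 1)))" by simp
  with False assms show ?thesis by (simp add: zpow_def bij_is_surj surj_f_inv_f)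
qed

lemma zpow_minus_1:
  assumes "bij f" shows "zpow f (k - 1) y = inv f (zpow f k y)"
  using zpow_plus_1[OF assms, of "k - 1" y] assms by (simp add: bij_is_inj)

lemma zpow_add:
  assumes "bij f" shows "zpow f (a + b) x = zpow f a (zpow f b x)"
proof (induction a rule: int_induct[where k = 0])
  case (step1 i)
  have "zpow f (i + 1 + b) x = zpow f ((i + b) + 1) x" by (simp add: ac_simps)
  with step1 show ?case by (simp add: zpow_plus_1[OF assms])
next
  case (step2 i)
  have "zpow f (i - 1 + b) x = zpow f ((i + b) - 1) x" by (simp add: algebra_simps)
  with step2 show ?case by (simp add: zpow_minus_1[OF assms])
qed simp

lemma inv_additive:
  fixes f :: "'a::group_add \<Rightarrow> 'a"
  assumes "bij f" and "\<And>x y. f (x + y) = f x + f y"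
  shows "inv f (u + v) = inv f u + inv f v"
  using assms by (metis bij_inv_eq_iff)

lemma zpow_additive:
  fixes f :: "'a::group_add \<Rightarrow> 'a"
  assumes "bij f" and "\<And>x y. f (x + y) = f x + f y"
  shows "zpow f k (x + y) = zpow f k x + zpow f k y"
proof (induction k rule: int_induct[where k = 0])
  case (step1 i) then show ?case by (simp add: zpow_plus_1[OF assms(1)] assms(2))
next
  case (step2 i) then show ?case by (simp add: zpow_minus_1[OF assms(1)] inv_additive[OF assms])
qed simp

lemma continuous_on_zpow:
  assumes "bij f" and "continuous_on UNIV f" and "continuous_on UNIV (inv f)"
  shows "continuous_on UNIV (zpow f k)"
proof (induction k rule: int_induct[where k = 0])
  case (step1 i)
  have "zpow f (i + 1) = f \<circ> zpow f i" by (simp add: fun_eq_iff zpow_plus_1[OF assms(1)])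
  with step1 assms(2) show ?case by (metis continuous_on_compose subset_UNIV continuous_on_subset)
next
  case (step2 i)
  have "zpow f (i - 1) = inv f \<circ> zpow f i" by (simp add: fun_eq_iff zpow_minus_1[OF assms(1)])
  with step2 assms(3) show ?case by (metis continuous_on_compose subset_UNIV continuous_on_subset)
qed (simp add: continuous_on_id)

lemma continuous_on_add_tg:
  fixes f g :: "'b::topological_space \<Rightarrow> 'a::{topological_space, group_add}"
  assumes "topological_group TYPE('a)" and "continuous_on UNIV f" and "continuous_on UNIV g"
  shows "continuous_on UNIV (\<lambda>x. f x + g x)"
  using assms continuous_on_compose2[of UNIV "\<lambda>p::'a \<times> 'a. fst p + snd p" UNIV "\<lambda>x. (f x, g x)"]
  by (simp add: topological_group_def continuous_on_Pair)

lemma continuous_on_minus_tg: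
  fixes f :: "'b::topological_space \<Rightarrow> 'a::{topological_space, group_add}"
  assumes "topological_group TYPE('a)" and "continuous_on UNIV f"
  shows "continuous_on UNIV (\<lambda>x. - f x)"
  using assms continuous_on_compose2[of UNIV "\<lambda>x::'a. - x" UNIV f]
  by (simp add: topological_group_def)

lemma open_translation_vimage:
  fixes S :: "'a::{topological_space, group_add} set"
  assumes "topological_group TYPE('a)" and "open S"
  shows "open ((\<lambda>u. c + u) -` S)"
  using assms by (intro open_vimage continuous_on_add_tg continuous_on_const continuous_on_id)

lemma is_subgroupD:
  assumes "is_subgroup V"
  shows "0 \<in> V" and "a \<in> V \<Longrightarrow> b \<in> V \<Longrightarrow> a + b \<in> V" and "a \<in> V \<Longrightarrow> - a \<in> V"
  using assms unfolding is_subgroup_def by auto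

lemma coset_trans:
  assumes "is_subgroup V" and "- a + b \<in> V" and "- b + c \<in> V"
  shows "- a + c \<in> V"
  using is_subgroupD(2)[OF assms(1) assms(2,3)] by (simp add: add.assoc)

lemma coset_sym:
  assumes "is_subgroup V" and "- a + b \<in> V"
  shows "- b + a \<in> V"
  using is_subgroupD(3)[OF assms] by (simp add: minus_add)

lemma coset_mem:
  assumes "is_subgroup V" and "a \<in> V" and "- b + a \<in> V"
  shows "b \<in> V"
  using coset_trans[OF assms(1) _ coset_sym[OF assms(1,3)], of 0] assms(2) by simp

lemma open_coset_union:
  fixes V :: "'a::{topological_space, group_add} set"
  assumes "topological_group TYPE('a)" and "open V"
  shows "open {u. \<exists>t\<in>S. - t + u \<in> V}"
proof -
  have "{u. \<exists>t\<in>S. - t + u \<in> V} = (\<Union>t\<in>S. (\<lambda>u. - t + u) -` V)" by auto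
  then show ?thesis using assms by (simp add: open_UN open_translation_vimage)
qed

lemma closed_coset_union:
  fixes V :: "'a::{topological_space, group_add} set"
  assumes "topological_group TYPE('a)" and "open V" and "is_subgroup V"
  shows "closed {u. \<exists>t\<in>S. - t + u \<in> V}" (is "closed ?W")
proof -
  have "- ?W = {u. \<exists>t\<in>- ?W. - t + u \<in> V}"
  proof (intro equalityI subsetI)
    fix u assume "u \<in> - ?W"
    then show "u \<in> {u. \<exists>t\<in>- ?W. - t + u \<in> V}" using is_subgroupD(1)[OF assms(3)] by force
  next
    fix u assume "u \<in> {u. \<exists>t\<in>- ?W. - t + u \<in> V}"
    then obtain t where t: "t \<notin> ?W" "- t + u \<in> V" by blast
    show "u \<in> - ?W"
    proof
      assume "u \<in> ?W"
      then obtain t' where "t' \<in> S" "- t' + u \<in> V" by blast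
      moreover have "- u + t \<in> V" using coset_sym[OF assms(3) t(2)] .
      ultimately show False using t(1) coset_trans[OF assms(3)] by blast
    qed
  qed
  then show ?thesis unfolding closed_def by (subst \<open>- ?W = _\<close>) (rule open_coset_union[OF assms(1,2)])
qed

lemma closed_open_subgroup:
  fixes V :: "'a::{topological_space, group_add} set"
  assumes "topological_group TYPE('a)" and "open V" and "is_subgroup V"
  shows "closed V"
  using closed_coset_union[OF assms, of "{0}"] by simp

lemma dense_range_meets_open:
  assumes "closure (range f) = UNIV" and "open A" and "A \<noteq> {}"
  obtains i where "f i \<in> A"
  using open_Int_closure_eq_empty[OF assms(2), of "range f"] assms(1,3) by auto

lemma open_nonempty_infinite:
  fixes W :: "'a::{t2_space, group_add} set"
  assumes "topological_group TYPE('a)" and "\<not> open {0::'a}" and "open W" and "W \<noteq> {}"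
  shows "infinite W"
proof
  assume "finite W"
  from assms(4) obtain w where w: "w \<in> W" by blast
  have "closed (W - {w})" using \<open>finite W\<close> by (intro finite_imp_closed) simp
  with assms(3) have "open (W - (W - {w}))" by (rule open_Diff)
  moreover have "W - (W - {w}) = {w}" using w by auto
  ultimately have "open ((\<lambda>u. w + u) -` {w})" using open_translation_vimage[OF assms(1)] by simp
  moreover have "(\<lambda>u. w + u) -` {w} = {0}" by (auto simp: add_left_cancel[of w _ 0, simplified])
  ultimately show False using assms(2) by simp
qed

subsection \<open>Actions of the integers with an open subgroup of trivial core\<close>

locale finite_depth_action =
  fixes \<phi> :: "int \<Rightarrow> 'a::{t2_space, group_add} \<Rightarrow> 'a" and V :: "'a set"
  assumes topological_group_G: "topological_group TYPE('a)"
    and compact_G: "compact (UNIV :: 'a set)"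
    and additive: "\<And>k x y. \<phi> k (x + y) = \<phi> k x + \<phi> k y"
    and action_add: "\<And>a b x. \<phi> (a + b) x = \<phi> a (\<phi> b x)"
    and action_0: "\<And>x. \<phi> 0 x = x"
    and continuous_action: "\<And>k. continuous_on UNIV (\<phi> k)"
    and open_V: "open V"
    and subgroup_V: "is_subgroup V"
    and trivial_core: "\<And>y. (\<forall>j. \<phi> j y \<in> V) \<Longrightarrow> y = 0"
begin

lemma action_zero [simp]: "\<phi> k 0 = 0"
proof -
  have "\<phi> k 0 + \<phi> k 0 = \<phi> k 0 + 0" using additive[of k 0 0] by simp
  then show ?thesis by (rule add_left_imp_eq)
qed

lemma action_minus [simp]: "\<phi> k (- x) = - \<phi> k x"
  using additive[of k "- x" x] by (simp add: eq_neg_iff_add_eq_0)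

lemma action_inverse [simp]: "\<phi> k (\<phi> (- k) x) = x" "\<phi> (- k) (\<phi> k x) = x"
  using action_add[of k "- k" x] action_add[of "- k" k x] by (simp_all add: action_0)

lemma continuous_on_diff_left: "continuous_on UNIV (\<lambda>t. - t + (c :: 'a))"
  by (intro continuous_on_add_tg continuous_on_minus_tg topological_group_G continuous_on_id continuous_on_const)

definition V_on :: "int set \<Rightarrow> 'a set" where
  "V_on S = {x. \<forall>j\<in>S. \<phi> j x \<in> V}"

lemma V_on_mono: "S \<subseteq> T \<Longrightarrow> V_on T \<subseteq> V_on S"
  by (auto simp: V_on_def)

lemma V_on_insert: "x \<in> V_on (insert j S) \<longleftrightarrow> \<phi> j x \<in> V \<and> x \<in> V_on S"
  by (simp add: V_on_def)

lemma action_in_V_on: "\<phi> p x \<in> V_on S \<longleftrightarrow> x \<in> V_on ((+) p ` S)"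
  by (simp add: V_on_def action_add add.commute)

lemma subgroup_V_on: "is_subgroup (V_on S)"
  using is_subgroupD[OF subgroup_V] by (simp add: is_subgroup_def V_on_def additive)

lemma closed_V_on: "closed (V_on S)"
proof -
  have "V_on S = (\<Inter>j\<in>S. \<phi> j -` V)" by (auto simp: V_on_def)
  then show ?thesis
    by (simp add: closed_INT closed_vimage continuous_action
        closed_open_subgroup[OF topological_group_G open_V subgroup_V])
qed

lemma open_V_on: "finite S \<Longrightarrow> open (V_on S)"
proof -
  assume "finite S"
  have "V_on S = (\<Inter>j\<in>S. \<phi> j -` V)" by (auto simp: V_on_def)
  with \<open>finite S\<close> show ?thesis by (simp add: open_INT open_vimage open_V continuous_action)
qed

lemma V_on_nhds_basis:
  assumes "open U" and "0 \<in> U"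
  obtains m :: nat where "V_on {- int m..int m} \<subseteq> U"
proof -
  have "\<exists>m::nat. V_on {- int m..int m} \<subseteq> U"
  proof (rule ccontr)
    assume none: "\<not> ?thesis"
    define F where "F m = V_on {- int m..int m} - U" for m :: nat
    have "(\<Inter>m. F m) \<noteq> {}"
    proof (rule compact_UNIV_imp_nest[OF compact_G])
      show "closed (F m)" for m unfolding F_def using assms(1) by (intro closed_Diff closed_V_on)
      show "F m \<noteq> {}" for m using none unfolding F_def by blast
      show "F n \<subseteq> F m" if "m \<le> n" for m n
        using that V_on_mono[of "{- int m..int m}" "{- int n..int n}"] unfolding F_def by auto
    qed
    then obtain y where y: "\<And>m. y \<in> F m" by blast
    have "\<phi> j y \<in> V" for j
    proof -
      have "j \<in> {- int (nat \<bar>j\<bar>)..int (nat \<bar>j\<bar>)}" by auto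
      then show ?thesis using y[of "nat \<bar>j\<bar>"] by (auto simp: F_def V_on_def)
    qed
    then have "y = 0" by (intro trivial_core) simp
    with y[of 0] assms(2) show False by (simp add: F_def)
  qed
  with that show ?thesis by blast
qed

lemma tendsto_action_zero:
  assumes "x \<in> V_on {p..}"
  shows "((\<lambda>n. \<phi> (int n) x) \<longlongrightarrow> 0) sequentially"
  unfolding tendsto_def
proof (intro allI impI)
  fix S :: "'a set" assume "open S" "0 \<in> S"
  then obtain m :: nat where m: "V_on {- int m..int m} \<subseteq> S" by (rule V_on_nhds_basis)
  have "\<phi> (int n) x \<in> S" if "nat (p + int m) \<le> n" for n
  proof -
    have "(+) (int n) ` {- int m..int m} \<subseteq> {p..}" using that by auto
    then have "\<phi> (int n) x \<in> V_on {- int m..int m}"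
      using assms V_on_mono unfolding action_in_V_on by blast
    with m show ?thesis by blast
  qed
  then show "\<forall>\<^sub>F n in sequentially. \<phi> (int n) x \<in> S" unfolding eventually_sequentially by blast
qed

lemma reversed: "finite_depth_action (\<lambda>k. \<phi> (- k)) V"
proof
  show "\<phi> (- (a + b)) x = \<phi> (- a) (\<phi> (- b) x)" for a b x using action_add[of "- a" "- b" x] by simp
  show "y = 0" if "\<forall>j. \<phi> (- j) y \<in> V" for y
    using that by (intro trivial_core) (metis minus_minus)
qed (simp_all add: topological_group_G compact_G additive action_0 continuous_action open_V subgroup_V)

lemma V_on_reversed: "finite_depth_action.V_on (\<lambda>k. \<phi> (- k)) V S = V_on (uminus ` S)"
proof -
  interpret rev: finite_depth_action "\<lambda>k. \<phi> (- k)" V by (rule reversed)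
  show ?thesis unfolding rev.V_on_def V_on_def by auto
qed

lemma tendsto_action_zero_backward:
  assumes "x \<in> V_on {..q}"
  shows "((\<lambda>n. \<phi> (- int n) x) \<longlongrightarrow> 0) sequentially"
proof -
  interpret rev: finite_depth_action "\<lambda>k. \<phi> (- k)" V by (rule reversed)
  have "x \<in> rev.V_on {- q..}" using assms by (simp add: V_on_reversed)
  then show ?thesis by (rule rev.tendsto_action_zero)
qed

subsection \<open>Local product structure\<close>

lemma coset_meets_V_on_atLeast_1:
  assumes "\<And>n::nat. \<exists>t\<in>V_on {1..int n}. - t + y \<in> V"
  shows "\<exists>t\<in>V_on {1..}. - t + y \<in> V"
proof -
  define F where "F n = V_on {1..int n} \<inter> (\<lambda>t. - t + y) -` V" for n :: nat
  have "(\<Inter>n. F n) \<noteq> {}"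
  proof (rule compact_UNIV_imp_nest[OF compact_G])
    show "closed (F n)" for n unfolding F_def
      by (intro closed_Int closed_V_on closed_vimage continuous_on_diff_left
          closed_open_subgroup[OF topological_group_G open_V subgroup_V])
    show "F n \<noteq> {}" for n using assms[of n] unfolding F_def by blast
    show "F n \<subseteq> F m" if "m \<le> n" for m n
      using that V_on_mono[of "{1..int m}" "{1..int n}"] unfolding F_def by auto
  qed
  then obtain t where t: "\<And>n. t \<in> F n" by blast
  have "\<phi> j t \<in> V" if "1 \<le> j" for j using t[of "nat j"] that by (simp add: F_def V_on_def)
  then have "t \<in> V_on {1..}" by (simp add: V_on_def)
  moreover have "- t + y \<in> V" using t[of 0] by (simp add: F_def)
  ultimately show ?thesis by blast
qed

text \<open>The sets Y n below are clopen unions of cosets of V decreasing to the open set Y_lim,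
  so by compactness Y n \<subseteq> Y_lim for large n.\<close>

lemma stable_approximation_0:
  obtains M :: nat where "\<And>y. y \<in> V_on {1..int M} \<Longrightarrow> \<exists>s\<in>V_on {1..}. - s + y \<in> V"
proof -
  define Y where "Y n = {y. \<exists>t\<in>V_on {1..int n}. - t + y \<in> V}" for n :: nat
  define Y_lim where "Y_lim = {y. \<exists>t\<in>V_on {1..}. - t + y \<in> V}"
  have "\<exists>M. V_on {1..int M} \<subseteq> Y_lim"
  proof (rule ccontr)
    assume none: "\<not> ?thesis"
    have "(\<Inter>n. Y n - Y_lim) \<noteq> {}"
    proof (rule compact_UNIV_imp_nest[OF compact_G])
      show "closed (Y n - Y_lim)" for n unfolding Y_def Y_lim_def
        by (intro closed_Diff closed_coset_union open_coset_union topological_group_G open_V subgroup_V)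
      show "Y n - Y_lim \<noteq> {}" for n
      proof -
        obtain y where "y \<in> V_on {1..int n}" "y \<notin> Y_lim" using none by blast
        moreover have "- y + y \<in> V" using is_subgroupD(1)[OF subgroup_V] by simp
        ultimately show ?thesis unfolding Y_def by blast
      qed
      show "Y n - Y_lim \<subseteq> Y m - Y_lim" if "m \<le> n" for m n
        using that V_on_mono[of "{1..int m}" "{1..int n}"] unfolding Y_def by auto
    qed
    then obtain y where "\<And>n. y \<in> Y n" "y \<notin> Y_lim" by blast
    with coset_meets_V_on_atLeast_1 show False unfolding Y_def Y_lim_def by blast
  qed
  then obtain M where "V_on {1..int M} \<subseteq> Y_lim" by blast
  then show ?thesis by (intro that) (auto simp: Y_lim_def)
qed

lemma stable_approximation:
  obtains M :: nat
  where "\<And>y p. y \<in> V_on {p + 1..p + int M} \<Longrightarrow> \<exists>s\<in>V_on {p + 1..}. \<phi> p (- s + y) \<in> V"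
proof -
  obtain M :: nat where M: "\<And>y. y \<in> V_on {1..int M} \<Longrightarrow> \<exists>s\<in>V_on {1..}. - s + y \<in> V"
    using stable_approximation_0 by blast
  have "\<exists>s\<in>V_on {p + 1..}. \<phi> p (- s + y) \<in> V" if "y \<in> V_on {p + 1..p + int M}" for y p
  proof -
    have "\<phi> p y \<in> V_on {1..int M}" using that by (simp add: action_in_V_on add.commute)
    then obtain s where s: "s \<in> V_on {1..}" "- s + \<phi> p y \<in> V" using M by blast
    have "\<phi> (- p) s \<in> V_on {p + 1..}"
      using s(1) action_in_V_on[of p "\<phi> (- p) s" "{1..}"] by simp
    moreover have "\<phi> p (- \<phi> (- p) s + y) = - s + \<phi> p y" by (simp add: additive)
    ultimately show ?thesis using s(2) by metis
  qed
  with that show ?thesis by blast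
qed

lemma extend_unstable_part:
  assumes M: "\<And>y p. y \<in> V_on {p + 1..p + int M} \<Longrightarrow> \<exists>s\<in>V_on {p + 1..}. \<phi> p (- s + y) \<in> V"
    and \<sigma>: "\<sigma> \<in> V_on {p + 1..}" "- \<sigma> + x \<in> V_on {q + 1..p + int M}" and "q \<le> p"
  shows "\<exists>\<sigma>'\<in>V_on {p + 1..}. - \<sigma>' + x \<in> V_on {q..p + int M}"
proof -
  have "- \<sigma> + x \<in> V_on {q + 1..q + int M}"
    using \<sigma>(2) V_on_mono[of "{q + 1..q + int M}" "{q + 1..p + int M}"] \<open>q \<le> p\<close> by auto
  then obtain s where s: "s \<in> V_on {q + 1..}" "\<phi> q (- s + (- \<sigma> + x)) \<in> V"
    using M by blast
  have s_V_on: "s \<in> V_on {q + 1..p + int M}" "s \<in> V_on {p + 1..}"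
    using s(1) V_on_mono[of "{q + 1..p + int M}" "{q + 1..}"] V_on_mono[of "{p + 1..}" "{q + 1..}"]
      \<open>q \<le> p\<close> by auto
  have "- s + (- \<sigma> + x) \<in> V_on {q + 1..p + int M}"
    using is_subgroupD(2,3)[OF subgroup_V_on] s_V_on(1) \<sigma>(2) by blast
  moreover have "{q..p + int M} = insert q {q + 1..p + int M}" using \<open>q \<le> p\<close> by auto
  ultimately have "- s + (- \<sigma> + x) \<in> V_on {q..p + int M}"
    using s(2) by (simp add: V_on_insert)
  moreover have "\<sigma> + s \<in> V_on {p + 1..}"
    using is_subgroupD(2)[OF subgroup_V_on \<sigma>(1) s_V_on(2)] .
  moreover have "- (\<sigma> + s) + x = - s + (- \<sigma> + x)" by (simp only: minus_add add.assoc)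
  ultimately show ?thesis by metis
qed

text \<open>Splitting off stable parts one step further into the past at a time, compactness yields
  a stable part whose complement stays in V on the whole past of the window.\<close>

lemma local_product_structure:
  obtains M :: nat where
    "\<And>x p. x \<in> V_on {p + 1..p + int M} \<Longrightarrow> \<exists>s\<in>V_on {p + 1..}. - s + x \<in> V_on {..p + int M}"
proof -
  obtain M :: nat where M: "\<And>y p. y \<in> V_on {p + 1..p + int M} \<Longrightarrow> \<exists>s\<in>V_on {p + 1..}. \<phi> p (- s + y) \<in> V"
    using stable_approximation by blast
  have "\<exists>s\<in>V_on {p + 1..}. - s + x \<in> V_on {..p + int M}" if x: "x \<in> V_on {p + 1..p + int M}" for x p
  proof -
    define F where "F k = {s \<in> V_on {p + 1..}. - s + x \<in> V_on {p + 1 - int k..p + int M}}" for k :: nat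
    have "F k \<noteq> {}" for k
    proof (induction k)
      case 0
      have "0 \<in> F 0" using x is_subgroupD(1)[OF subgroup_V_on] by (simp add: F_def)
      then show ?case by blast
    next
      case (Suc k)
      then obtain \<sigma> where "\<sigma> \<in> V_on {p + 1..}" "- \<sigma> + x \<in> V_on {(p - int k) + 1..p + int M}"
        unfolding F_def by (auto simp: algebra_simps)
      from extend_unstable_part[OF M this] show ?case by (auto simp: F_def algebra_simps)
    qed
    moreover have "closed (F k)" for k
    proof -
      have "F k = V_on {p + 1..} \<inter> (\<lambda>s. - s + x) -` V_on {p + 1 - int k..p + int M}"
        unfolding F_def by auto
      then show ?thesis by (simp add: closed_Int closed_vimage closed_V_on continuous_on_diff_left)
    qed
    moreover have "F n \<subseteq> F m" if "m \<le> n" for m n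
      using that V_on_mono[of "{p + 1 - int m..p + int M}" "{p + 1 - int n..p + int M}"]
      unfolding F_def by auto
    ultimately have "(\<Inter>k. F k) \<noteq> {}" by (intro compact_UNIV_imp_nest[OF compact_G])
    then obtain s where s: "\<And>k. s \<in> F k" by blast
    have "\<phi> j (- s + x) \<in> V" if "j \<le> p + int M" for j
      using s[of "nat (p + 1 - j)"] that by (auto simp: F_def V_on_def)
    then show ?thesis using s[of 0] by (auto simp: F_def V_on_def)
  qed
  with that show ?thesis by blast
qed

lemma local_product_structure_backward:
  obtains M :: nat where
    "\<And>x q. x \<in> V_on {q - int M..q - 1} \<Longrightarrow> \<exists>s\<in>V_on {..q - 1}. - s + x \<in> V_on {q - int M..}"
proof -
  interpret rev: finite_depth_action "\<lambda>k. \<phi> (- k)" V by (rule reversed)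
  obtain M :: nat where M: "\<And>x p. x \<in> rev.V_on {p + 1..p + int M} \<Longrightarrow>
      \<exists>s\<in>rev.V_on {p + 1..}. - s + x \<in> rev.V_on {..p + int M}"
    using rev.local_product_structure by blast
  have "\<exists>s\<in>V_on {..q - 1}. - s + x \<in> V_on {q - int M..}" if "x \<in> V_on {q - int M..q - 1}" for x q
    using M[of x "- q"] that by (simp add: V_on_reversed)
  with that show ?thesis by blast
qed

text \<open>The tails of y are cut off by the forward product structure at the later window and by the
  backward one at the earlier window.\<close>

lemma homoclinic_approximation:
  obtains L :: nat where
    "\<And>y a b. a + int L < b \<Longrightarrow> y \<in> V_on {a..a + int L} \<Longrightarrow> y \<in> V_on {b..b + int L} \<Longrightarrow>
      \<exists>\<tau>\<in>V_on {..<a} \<inter> V_on {b..}. - y + \<tau> \<in> V_on {a..<b}"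
proof -
  obtain M :: nat where M: "\<And>x p. x \<in> V_on {p + 1..p + int M} \<Longrightarrow>
      \<exists>s\<in>V_on {p + 1..}. - s + x \<in> V_on {..p + int M}"
    using local_product_structure by blast
  obtain M' :: nat where M': "\<And>x q. x \<in> V_on {q - int M'..q - 1} \<Longrightarrow>
      \<exists>s\<in>V_on {..q - 1}. - s + x \<in> V_on {q - int M'..}"
    using local_product_structure_backward by blast
  have "\<exists>\<tau>\<in>V_on {..<a} \<inter> V_on {b..}. - y + \<tau> \<in> V_on {a..<b}"
    if ab: "a + int (M + M') < b"
      and y: "y \<in> V_on {a..a + int (M + M')}" "y \<in> V_on {b..b + int (M + M')}" for y a b
  proof -
    have "{(b - 1) + 1..(b - 1) + int M} \<subseteq> {b..b + int (M + M')}" by auto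
    with y(2) have "y \<in> V_on {(b - 1) + 1..(b - 1) + int M}" by (meson V_on_mono subsetD)
    from M[OF this] obtain s where "s \<in> V_on {b - 1 + 1..}" "- s + y \<in> V_on {..b - 1 + int M}"
      by blast
    then have s: "s \<in> V_on {b..}" "- s + y \<in> V_on {..b - 1 + int M}" by simp_all
    have "{a..a + int M' - 1} \<subseteq> {..b - 1 + int M}" "{a..a + int M' - 1} \<subseteq> {a..a + int (M + M')}"
      using ab by auto
    then have "- s + y \<in> V_on {a..a + int M' - 1}" "y \<in> V_on {a..a + int M' - 1}"
      using s(2) y(1) by (meson V_on_mono subsetD)+
    from coset_mem[OF subgroup_V_on this(2,1)]
    have "s \<in> V_on {(a + int M') - int M'..(a + int M') - 1}" by simp
    from M'[OF this] obtain \<sigma> where "\<sigma> \<in> V_on {..a + int M' - 1}" "- \<sigma> + s \<in> V_on {a + int M' - int M'..}"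
      by blast
    then have \<sigma>: "\<sigma> \<in> V_on {..a + int M' - 1}" "- \<sigma> + s \<in> V_on {a..}" by simp_all
    have "{..<a} \<subseteq> {..a + int M' - 1}" "{b..} \<subseteq> {a..}" "{a..<b} \<subseteq> {..b - 1 + int M}" "{a..<b} \<subseteq> {a..}"
      using ab by auto
    note sub = V_on_mono[OF this(1)] V_on_mono[OF this(2)] V_on_mono[OF this(3)] V_on_mono[OF this(4)]
    have "\<sigma> \<in> V_on {..<a}" using \<sigma>(1) sub(1) by blast
    moreover have "\<sigma> \<in> V_on {b..}"
      using coset_mem[OF subgroup_V_on s(1)] \<sigma>(2) sub(2) by blast
    moreover have "- y + \<sigma> \<in> V_on {a..<b}"
      using coset_trans[OF subgroup_V_on] coset_sym[OF subgroup_V_on s(2)] coset_sym[OF subgroup_V_on \<sigma>(2)]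
        sub(3,4) by blast
    ultimately show ?thesis by blast
  qed
  with that show ?thesis by blast
qed

subsection \<open>Recurrence and density of homoclinic points\<close>

lemma orbit_returns_late:
  assumes dense: "closure (range (\<lambda>k. \<phi> k z)) = UNIV" and "\<not> open {0::'a}"
    and "open W" and "W \<noteq> {}"
  shows "\<exists>y\<in>W. \<exists>k\<ge>b. \<phi> k y \<in> W"
proof -
  define K where "K = {k. \<phi> k z \<in> W}"
  have "infinite K"
  proof
    assume "finite K"
    define W' where "W' = W - (\<lambda>k. \<phi> k z) ` K"
    have "closed ((\<lambda>k. \<phi> k z) ` K)" using \<open>finite K\<close> by (intro finite_imp_closed finite_imageI)
    with \<open>open W\<close> have "open W'" unfolding W'_def by (rule open_Diff)
    moreover have "W' \<noteq> {}"
    proof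
      assume "W' = {}"
      then have "W \<subseteq> (\<lambda>k. \<phi> k z) ` K" unfolding W'_def by blast
      with \<open>finite K\<close> have "finite W" by (metis finite_imageI finite_subset)
      with open_nonempty_infinite[OF topological_group_G assms(2-4)] show False by blast
    qed
    ultimately obtain i where "\<phi> i z \<in> W'" using dense_range_meets_open[OF dense] by metis
    then show False unfolding W'_def K_def by blast
  qed
  then obtain k0 where "k0 \<in> K" using infinite_imp_nonempty by blast
  then have k0: "\<phi> k0 z \<in> W" by (simp add: K_def)
  have "\<not> K \<subseteq> {k0 - b<..<k0 + b}"
    using \<open>infinite K\<close> finite_subset[OF _ finite_greaterThanLessThan_int] by blast
  then obtain k where k: "\<phi> k z \<in> W" "k \<notin> {k0 - b<..<k0 + b}" unfolding K_def by blast
  show ?thesis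
  proof (cases "k0 + b \<le> k")
    case True
    have "\<phi> (k - k0) (\<phi> k0 z) = \<phi> k z" using action_add[of "k - k0" k0 z] by simp
    with True k(1) k0 show ?thesis by (intro bexI[of _ "\<phi> k0 z"] exI[of _ "k - k0"]) simp_all
  next
    case False
    with k(2) have "k0 - k \<ge> b" by simp
    moreover have "\<phi> (k0 - k) (\<phi> k z) = \<phi> k0 z" using action_add[of "k0 - k" k z] by simp
    ultimately show ?thesis using k(1) k0 by (intro bexI[of _ "\<phi> k z"] exI[of _ "k0 - k"]) simp_all
  qed
qed

lemma orbit_connects_late:
  assumes dense: "closure (range (\<lambda>k. \<phi> k z)) = UNIV" and nondiscrete: "\<not> open {0::'a}"
    and A: "open A" "A \<noteq> {}" and B: "open B" "B \<noteq> {}"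
  shows "\<exists>y\<in>A. \<exists>k\<ge>b. \<phi> k y \<in> B"
proof -
  obtain i j where i: "\<phi> i z \<in> A" and j: "\<phi> j z \<in> B"
    using dense_range_meets_open[OF dense A] dense_range_meets_open[OF dense B] by metis
  have "\<phi> (j - i) (\<phi> i z) = \<phi> j z" using action_add[of "j - i" i z] by simp
  define W where "W = A \<inter> \<phi> (j - i) -` B"
  have "open W" unfolding W_def by (intro open_Int A(1) open_vimage B(1) continuous_action)
  moreover have "W \<noteq> {}" unfolding W_def using i j \<open>\<phi> (j - i) (\<phi> i z) = \<phi> j z\<close> by auto
  ultimately obtain w k where w: "w \<in> W" "k \<ge> b - (j - i)" "\<phi> k w \<in> W"
    using orbit_returns_late[OF dense nondiscrete] by blast
  have "\<phi> (j - i + k) w \<in> B" using w(3) action_add[of "j - i" k w] unfolding W_def by simp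
  with w show ?thesis unfolding W_def by (intro bexI[of _ w] exI[of _ "j - i + k"]) auto
qed

lemma orbit_in_V_on_two_windows:
  assumes dense: "closure (range (\<lambda>k. \<phi> k z)) = UNIV" and nondiscrete: "\<not> open {0::'a}"
    and "open U" and "U \<noteq> {}"
  shows "\<exists>y\<in>U. \<exists>a b. a \<le> - c \<and> c \<le> b \<and> y \<in> V_on {a..a + int L} \<and> y \<in> V_on {b..b + int L}"
proof -
  define U0 where "U0 = V_on {0..int L}"
  have "open U0" "U0 \<noteq> {}"
    unfolding U0_def using open_V_on is_subgroupD(1)[OF subgroup_V_on] by auto
  then obtain y1 k where "y1 \<in> U" "k \<ge> c" "\<phi> k y1 \<in> U0"
    using orbit_connects_late[OF dense nondiscrete \<open>open U\<close> \<open>U \<noteq> {}\<close>] by blast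
  define A where "A = U \<inter> \<phi> k -` U0"
  have "open A" unfolding A_def by (intro open_Int \<open>open U\<close> open_vimage \<open>open U0\<close> continuous_action)
  moreover have "A \<noteq> {}" unfolding A_def using \<open>y1 \<in> U\<close> \<open>\<phi> k y1 \<in> U0\<close> by blast
  ultimately obtain y0 k' where "y0 \<in> U0" "k' \<ge> c" "\<phi> k' y0 \<in> A"
    using orbit_connects_late[OF dense nondiscrete \<open>open U0\<close> \<open>U0 \<noteq> {}\<close>] by blast
  define y where "y = \<phi> k' y0"
  have "y \<in> U" "\<phi> k y \<in> V_on {0..int L}" using \<open>\<phi> k' y0 \<in> A\<close> by (simp_all add: y_def A_def U0_def)
  then have "y \<in> V_on {k..k + int L}" by (simp add: action_in_V_on add.commute)
  moreover have "\<phi> (- k') y \<in> V_on {0..int L}" using \<open>y0 \<in> U0\<close> by (simp add: y_def U0_def)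
  then have "y \<in> V_on {- k'..- k' + int L}" by (simp add: action_in_V_on add.commute)
  ultimately show ?thesis using \<open>y \<in> U\<close> \<open>k \<ge> c\<close> \<open>k' \<ge> c\<close> by (intro bexI[of _ y] exI[of _ "- k'"] exI[of _ k]) auto
qed

definition homoclinic_points :: "'a set" where
  "homoclinic_points = {\<tau>. \<exists>a b. \<tau> \<in> V_on {..a} \<inter> V_on {b..}}"

lemma homoclinic_point_near:
  assumes dense: "closure (range (\<lambda>k. \<phi> k z)) = UNIV" and nondiscrete: "\<not> open {0::'a}"
    and "open U" and "x \<in> U"
  shows "U \<inter> homoclinic_points \<noteq> {}"
proof -
  obtain L :: nat where L: "\<And>y a b. a + int L < b \<Longrightarrow> y \<in> V_on {a..a + int L} \<Longrightarrow>
      y \<in> V_on {b..b + int L} \<Longrightarrow> \<exists>\<tau>\<in>V_on {..<a} \<inter> V_on {b..}. - y + \<tau> \<in> V_on {a..<b}"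
    using homoclinic_approximation by blast
  have "open ((\<lambda>u. x + u) -` U)" using topological_group_G \<open>open U\<close> by (rule open_translation_vimage)
  moreover have "0 \<in> (\<lambda>u. x + u) -` U" using \<open>x \<in> U\<close> by simp
  ultimately obtain m :: nat where m: "V_on {- int m..int m} \<subseteq> (\<lambda>u. x + u) -` U"
    by (rule V_on_nhds_basis)
  define U1 where "U1 = (\<lambda>u. - x + u) -` V_on {- int m..int m}"
  have "open U1" unfolding U1_def by (intro open_translation_vimage[OF topological_group_G] open_V_on) simp
  moreover have "x \<in> U1" using is_subgroupD(1)[OF subgroup_V_on] by (simp add: U1_def)
  then have "U1 \<noteq> {}" by blast
  ultimately obtain y a b where y: "y \<in> U1" and ab: "a \<le> - (int m + int L + 1)" "int m + int L + 1 \<le> b"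
    and windows: "y \<in> V_on {a..a + int L}" "y \<in> V_on {b..b + int L}"
    using orbit_in_V_on_two_windows[OF dense nondiscrete] by blast
  have "a + int L < b" using ab by simp
  from L[OF this windows] obtain \<tau> where \<tau>: "\<tau> \<in> V_on {..<a} \<inter> V_on {b..}" "- y + \<tau> \<in> V_on {a..<b}"
    by blast
  have "{- int m..int m} \<subseteq> {a..<b}" "{..a - 1} \<subseteq> {..<a}" using ab by auto
  note sub = V_on_mono[OF this(1)] V_on_mono[OF this(2)]
  have "- x + y \<in> V_on {- int m..int m}" using y by (simp add: U1_def)
  moreover have "- y + \<tau> \<in> V_on {- int m..int m}" using \<tau>(2) sub(1) by blast
  ultimately have "- x + \<tau> \<in> V_on {- int m..int m}" by (rule coset_trans[OF subgroup_V_on])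
  then have "\<tau> \<in> U" using m by auto
  moreover have "\<tau> \<in> V_on {..a - 1} \<inter> V_on {b..}" using \<tau>(1) sub(2) by blast
  then have "\<tau> \<in> homoclinic_points" unfolding homoclinic_points_def by blast
  ultimately show ?thesis by blast
qed

lemma homoclinic_points_dense:
  assumes dense: "closure (range (\<lambda>k. \<phi> k z)) = UNIV"
  shows "closure homoclinic_points = UNIV"
proof (cases "open {0::'a}")
  case True
  txt \<open>A discrete G is the orbit itself, and the orbit of z meets 0 only if z = 0; so G = {0}.\<close>
  have "open {w}" for w :: 'a
  proof -
    have "(\<lambda>u. - w + u) -` {0} = {w}" by (auto simp: neg_eq_iff_add_eq_0[symmetric])
    then show ?thesis using open_translation_vimage[OF topological_group_G True, of "- w"] by simp
  qed
  then have "open S" for S :: "'a set" using open_UN[of S "\<lambda>w. {w}"] by simp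
  then have "closed (range (\<lambda>k. \<phi> k z))" by (simp add: closed_def)
  with dense have orbit: "range (\<lambda>k. \<phi> k z) = UNIV" by (simp add: closure_closed)
  then have "0 \<in> range (\<lambda>k. \<phi> k z)" by simp
  then obtain k where "0 = \<phi> k z" by blast
  then have "z = 0" using action_inverse(2)[of k z] by simp
  have "x \<in> homoclinic_points" for x
  proof -
    have "x \<in> range (\<lambda>k. \<phi> k z)" using orbit by simp
    then obtain j where "x = \<phi> j z" by blast
    with \<open>z = 0\<close> have "x = 0" by simp
    with is_subgroupD(1)[OF subgroup_V_on] show ?thesis unfolding homoclinic_points_def by blast
  qed
  then have "homoclinic_points = UNIV" by blast
  then show ?thesis by simp
next
  case False
  have "x \<in> closure homoclinic_points" for x
  proof (rule ccontr)
    assume "x \<notin> closure homoclinic_points"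
    with homoclinic_point_near[OF dense False open_Compl[OF closed_closure]]
    have "- closure homoclinic_points \<inter> homoclinic_points \<noteq> {}" by blast
    then show False using closure_subset by blast
  qed
  then show ?thesis by blast
qed

end

lemma finite_depth_action_zpow:
  fixes \<alpha> :: "'a::{t2_space, group_add} \<Rightarrow> 'a"
  assumes "topological_group TYPE('a)" and "compact (UNIV :: 'a set)"
    and "top_group_automorphism \<alpha>" and "open V" and "is_subgroup V"
    and trivial: "(\<Inter>k. zpow \<alpha> k ` V) = {0}"
  shows "finite_depth_action (zpow \<alpha>) V"
proof
  from assms(3) have bij: "bij \<alpha>" and add: "\<And>x y. \<alpha> (x + y) = \<alpha> x + \<alpha> y"
    and "continuous_on UNIV \<alpha>" "continuous_on UNIV (inv \<alpha>)"
    unfolding top_group_automorphism_def by auto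
  show "zpow \<alpha> k (x + y) = zpow \<alpha> k x + zpow \<alpha> k y" for k x y by (rule zpow_additive[OF bij add])
  show "zpow \<alpha> (a + b) x = zpow \<alpha> a (zpow \<alpha> b x)" for a b x by (rule zpow_add[OF bij])
  show "continuous_on UNIV (zpow \<alpha> k)" for k
    by (rule continuous_on_zpow) fact+
  show "y = 0" if "\<forall>j. zpow \<alpha> j y \<in> V" for y
  proof -
    have "y \<in> zpow \<alpha> k ` V" for k
    proof
      show "y = zpow \<alpha> k (zpow \<alpha> (- k) y)" using zpow_add[OF bij, of k "- k" y] by simp
    qed (use that in simp)
    then show ?thesis using trivial by blast
  qed
qed (use assms in simp_all)

theorem corollary5p9:
  fixes \<alpha> :: "'a::{t2_space, group_add} \<Rightarrow> 'a"
  assumes "topological_group TYPE('a)"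
    and "compact (UNIV :: 'a set)"
    and "top_group_automorphism \<alpha>"
    and "topologically_transitive \<alpha>"
    and "finite_depth \<alpha>"
  shows "closure (con \<alpha> \<inter> con (inv \<alpha>)) = UNIV"
proof -
  from assms(5) obtain V where V: "open V" "is_subgroup V" "(\<Inter>k. zpow \<alpha> k ` V) = {0}"
    unfolding finite_depth_def by blast
  interpret finite_depth_action "zpow \<alpha>" V
    using finite_depth_action_zpow[OF assms(1-3) V] .
  from assms(4) obtain z where z: "closure (range (\<lambda>k. zpow \<alpha> k z)) = UNIV"
    unfolding topologically_transitive_def by blast
  have "homoclinic_points \<subseteq> con \<alpha> \<inter> con (inv \<alpha>)"
  proof
    fix \<tau> assume "\<tau> \<in> homoclinic_points"
    then obtain a b where "\<tau> \<in> V_on {..a}" "\<tau> \<in> V_on {b..}" unfolding homoclinic_points_def by blast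
    from tendsto_action_zero[OF this(2)] tendsto_action_zero_backward[OF this(1)]
    show "\<tau> \<in> con \<alpha> \<inter> con (inv \<alpha>)" by (simp add: con_def zpow_of_nat zpow_minus_of_nat)
  qed
  then show ?thesis using homoclinic_points_dense[OF z] closure_mono by blast
qed

end
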